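(* Fix $Y$, $q>0$, $\beta\in(0,1)$ and $\rho\in\mathbb R$, and let $(a^*(\delta),b^*(\delta))$ be the selected pair as a function of $\delta>0$. Then $b^*(\delta)>0$ for all sufficiently large $\delta$, and $b^*(\delta)\to\infty$ as $\delta\uparrow\infty$.
   Context: Let $Y$ be a spectrally positive Lévy process (not a subordinator) with Laplace exponent $\psi_Y(\theta)=\log\mathbb E[e^{-\theta Y_1}]$ and $\mathbb E[Y_1]=-\psi_Y'(0+)<\infty$. For $\delta>0$, let $X_t=Y_t-\delta t$, with $\psi_X(\theta)=\psi_Y(\theta)+\delta\theta$; the objects below depending on $X$ depend on $\delta$. The scale functions $\mathbb W^{(q)}$ and $W^{(q)}$ vanish on $(-\infty,0)$, are continuous and strictly increasing on $[0,\infty)$, and have Laplace transforms $1/(\psi_Y(\theta)-q)$ and $1/(\psi_X(\theta)-q)$, respectively. Let $\mathbb Z^{(q)}(x)=1+q\int_0^x\mathbb W^{(q)}$, $Z^{(q)}(x)=1+q\int_0^xW^{(q)}$, $\overline Z^{(q)}(x)=\int_0^xZ^{(q)}$, and $R^{(q)}(z)=\overline Z^{(q)}(z)+\psi_X'(0+)/q$. Let $\tilde r^{(q)}_c(z)=R^{(q)}(z)+\delta\int_c^z\mathbb W^{(q)}(z-y)Z^{(q)}(y)\,dy$ and $\Gamma(a,b)=\delta\mathbb Z^{(q)}(a)-q\rho-q\beta\tilde r^{(q)}_{b-a}(b)$ for $0\le a\le b$. Selected pair: if $\Gamma(0,0)=\delta-q\rho-\beta\psi_X'(0+)\le0$, then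 $a^*=b^*=0$. Otherwise, $b^*>0$ is the unique root of $\min_{0\le a\le b^*}\Gamma(a,b^* )=0$, and $a^*$ is the unique minimizer of $a\mapsto\Gamma(a,b^* )$ on $[0,b^*]$. *)

theory Defs
  imports "HOL-Analysis.Analysis"
begin

text \<open>A spectrally positive Levy process Y is represented through its Levy-Khintchine
  triple (c, sigma, Pi): Pi is a Levy measure on (0,infinity), and the Laplace exponent is
  psi_Y(theta) = log E[exp(-theta Y_1)]
     = c theta + sigma^2 theta^2 / 2 + int (exp(-theta z) - 1 + theta z 1_{z<1}) Pi(dz).\<close>

definition psiY :: "real \<Rightarrow> real \<Rightarrow> real measure \<Rightarrow> real \<Rightarrow> real" where
  "psiY c \<sigma> Lm \<theta> = c * \<theta> + \<sigma>\<^sup>2 / 2 * \<theta>\<^sup>2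
      + (\<integral>z. (exp (- \<theta> * z) - 1 + \<theta> * z * indicator {..<1} z) \<partial>Lm)"

text \<open>Y is a subordinator (non-decreasing paths) iff sigma = 0, int_{(0,1)} z Pi(dz) < infinity,
  and the drift  -(c + int_{(0,1)} z Pi(dz))  is non-negative.\<close>
definition is_subordinator_triple :: "real \<Rightarrow> real \<Rightarrow> real measure \<Rightarrow> bool" where
  "is_subordinator_triple c \<sigma> Lm \<longleftrightarrow>
     \<sigma> = 0 \<and> set_integrable Lm {..<1} (\<lambda>z. z) \<and> c + (LINT z:{..<1}|Lm. z) \<le> 0"

text \<open>Standing assumptions: spectrally positive Levy process, not a subordinator,
  with E[Y_1] < infinity (equivalently int_{[1,infinity)} z Pi(dz) < infinity).\<close>
definition sp_levy_triple :: "real \<Rightarrow> real \<Rightarrow> real measure \<Rightarrow> bool" where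
  "sp_levy_triple c \<sigma> Lm \<longleftrightarrow>
     sets Lm = sets borel \<and> emeasure Lm {..0} = 0 \<and> \<sigma> \<ge> 0 \<and>
     integrable Lm (\<lambda>z. min 1 (z\<^sup>2)) \<and>
     set_integrable Lm {1..} (\<lambda>z. z) \<and>
     \<not> is_subordinator_triple c \<sigma> Lm"

text \<open>Right derivative at 0 of a Laplace exponent (note psi(0) = 0).\<close>
definition dpsi0 :: "(real \<Rightarrow> real) \<Rightarrow> real" where
  "dpsi0 \<psi> = Lim (at_right 0) (\<lambda>\<theta>. \<psi> \<theta> / \<theta>)"

text \<open>q-scale function of a Laplace exponent psi: vanishes on (-infinity,0), continuous and
  strictly increasing on [0,infinity), with Laplace transform 1/(psi(theta)-q) for
  theta > Phi(q) (equivalently theta > 0 with psi(theta) > q).\<close>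
definition is_scale_fun :: "(real \<Rightarrow> real) \<Rightarrow> real \<Rightarrow> (real \<Rightarrow> real) \<Rightarrow> bool" where
  "is_scale_fun \<psi> q W \<longleftrightarrow>
     (\<forall>x<0. W x = 0) \<and> continuous_on {0..} W \<and> strict_mono_on {0..} W \<and>
     (\<forall>\<theta>>0. \<psi> \<theta> > q \<longrightarrow>
        set_integrable lborel {0..} (\<lambda>x. exp (- \<theta> * x) * W x) \<and>
        (LINT x:{0..}|lborel. exp (- \<theta> * x) * W x) = 1 / (\<psi> \<theta> - q))"

definition Zq :: "real \<Rightarrow> (real \<Rightarrow> real) \<Rightarrow> real \<Rightarrow> real" where
  "Zq q W x = 1 + q * integral {0..x} W"

definition Zbar :: "real \<Rightarrow> (real \<Rightarrow> real) \<Rightarrow> real \<Rightarrow> real" where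
  "Zbar q W x = integral {0..x} (Zq q W)"

text \<open>R^(q)(z) = Zbar^(q)(z) + psi_X'(0+)/q, with WX the scale function of X and dX = psi_X'(0+).\<close>
definition Rq :: "real \<Rightarrow> (real \<Rightarrow> real) \<Rightarrow> real \<Rightarrow> real \<Rightarrow> real" where
  "Rq q WX dX z = Zbar q WX z + dX / q"

definition rtilde :: "real \<Rightarrow> real \<Rightarrow> (real \<Rightarrow> real) \<Rightarrow> (real \<Rightarrow> real) \<Rightarrow> real \<Rightarrow> real \<Rightarrow> real \<Rightarrow> real" where
  "rtilde q \<delta> WY WX dX c z = Rq q WX dX z + \<delta> * integral {c..z} (\<lambda>y. WY (z - y) * Zq q WX y)"

definition Gam :: "real \<Rightarrow> real \<Rightarrow> real \<Rightarrow> real \<Rightarrow> (real \<Rightarrow> real) \<Rightarrow> (real \<Rightarrow> real) \<Rightarrow> real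
                    \<Rightarrow> real \<Rightarrow> real \<Rightarrow> real" where
  "Gam q \<rho> \<beta> \<delta> WY WX dX a b =
     \<delta> * Zq q WY a - q * \<rho> - q * \<beta> * rtilde q \<delta> WY WX dX (b - a) b"

definition selected_b :: "real \<Rightarrow> real \<Rightarrow> real \<Rightarrow> real \<Rightarrow> (real \<Rightarrow> real) \<Rightarrow> (real \<Rightarrow> real) \<Rightarrow> real
                    \<Rightarrow> real" where
  "selected_b q \<rho> \<beta> \<delta> WY WX dX =
     (let G = Gam q \<rho> \<beta> \<delta> WY WX dX in
      if G 0 0 \<le> 0 then 0
      else (THE b. b > 0 \<and> (\<exists>a\<in>{0..b}. G a b = 0) \<and> (\<forall>a\<in>{0..b}. G a b \<ge> 0)))"

end

theory Submission
  imports Defs "HOL-Real_Asymp.Real_Asymp"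
begin

text \<open>For fixed \<open>B\<close>, the Laplace transform of the scale function of \<open>X = Y - \<delta>t\<close> gives
  \<open>W\<^sub>X(B) \<le> e\<^sup>B\<^sup>+\<^sup>1 / (\<psi>\<^sub>Y(1) + \<delta> - q)\<close>, so \<open>Z\<^sub>X(B) \<rightarrow> 1\<close> as \<open>\<delta> \<rightarrow> \<infinity>\<close>. Once \<open>\<beta> Z\<^sub>X(B) \<le> 1\<close>,
  the \<open>\<delta>\<close>-terms of \<open>\<Gamma>(a, b)\<close> balance on the triangle \<open>0 \<le> a \<le> b \<le> B\<close> and
  \<open>\<Gamma>(a, b) \<ge> \<delta> - q\<rho> - qB - \<beta>\<psi>\<^sub>X'(0+) \<ge> (1 - \<beta>)\<delta> - q\<rho> - qB - \<beta>\<psi>\<^sub>Y'(0+) > 0\<close> for large \<open>\<delta>\<close>.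
  On the other hand \<open>\<Gamma>(a, b)\<close> is Lipschitz and strictly decreasing in \<open>b\<close> with \<open>\<Gamma>(0, b) \<rightarrow> -\<infinity>\<close>, so
  \<open>b \<mapsto> min\<^sub>a \<Gamma>(a, b)\<close> has a unique zero \<open>b\<^sup>*\<close>, which must lie beyond \<open>B\<close>.

  The scale functions are only known to be increasing with the given Laplace transform; they
  are nonnegative because \<open>\<psi>\<^sub>Y\<close> is unbounded above when \<open>Y\<close> is not a subordinator.\<close>

section \<open>Regular scale functions\<close>

definition regular_scale :: "(real \<Rightarrow> real) \<Rightarrow> bool" where
  "regular_scale W \<longleftrightarrow> mono W \<and> (\<forall>x<0. W x = 0) \<and> continuous_on {0..} W"

context
  fixes W :: "real \<Rightarrow> real"
  assumes W: "regular_scale W"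
begin

lemma regular_scale_mono: "x \<le> y \<Longrightarrow> W x \<le> W y"
  using W unfolding regular_scale_def mono_def by blast

lemma regular_scale_nonneg: "0 \<le> W x"
proof -
  have "W (min x (-1)) = 0" using W unfolding regular_scale_def by simp
  then show ?thesis using regular_scale_mono[of "min x (-1)" x] by simp
qed

lemma regular_scale_integrable: "0 \<le> s \<Longrightarrow> W integrable_on {s..t}"
  using W unfolding regular_scale_def
  by (intro integrable_continuous_real) (auto elim: continuous_on_subset)

lemma integral_regular_scale_split:
  "0 \<le> s \<Longrightarrow> s \<le> t \<Longrightarrow> integral {0..t} W = integral {0..s} W + integral {s..t} W"
  by (simp add: Henstock_Kurzweil_Integration.integral_combine regular_scale_integrable)

lemma integral_regular_scale_bounds:
  assumes "0 \<le> s" "s \<le> t"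
  shows "0 \<le> integral {s..t} W" "integral {s..t} W \<le> (t - s) * W t"
proof -
  show "0 \<le> integral {s..t} W"
    by (intro integral_nonneg regular_scale_integrable assms regular_scale_nonneg)
  have "integral {s..t} W \<le> integral {s..t} (\<lambda>_. W t)"
    by (intro integral_le regular_scale_integrable assms regular_scale_mono) auto
  then show "integral {s..t} W \<le> (t - s) * W t" using assms by simp
qed

lemma Zq_ge_one: "0 \<le> q \<Longrightarrow> 1 \<le> Zq q W x"
  using integral_regular_scale_bounds[of 0 x] by (cases "0 \<le> x") (auto simp: Zq_def)

lemma Zq_nonneg: "0 \<le> q \<Longrightarrow> 0 \<le> Zq q W x"
  using Zq_ge_one by (rule order_trans[OF zero_le_one])

lemma Zq_increment_bounds:
  assumes "0 \<le> q" "0 \<le> s" "s \<le> t"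
  shows "0 \<le> Zq q W t - Zq q W s" "Zq q W t - Zq q W s \<le> q * (t - s) * W t"
proof -
  have "Zq q W t - Zq q W s = q * integral {s..t} W"
    using integral_regular_scale_split[OF assms(2,3)] by (simp add: Zq_def algebra_simps)
  then show "0 \<le> Zq q W t - Zq q W s" "Zq q W t - Zq q W s \<le> q * (t - s) * W t"
    using integral_regular_scale_bounds[OF assms(2,3)] assms(1)
    by (simp_all add: mult_left_mono mult.assoc)
qed

lemma Zq_mono: "0 \<le> q \<Longrightarrow> 0 \<le> s \<Longrightarrow> s \<le> t \<Longrightarrow> Zq q W s \<le> Zq q W t"
  using Zq_increment_bounds(1) by fastforce

lemma continuous_on_Zq: "continuous_on {0..t} (Zq q W)"
  unfolding Zq_def
  by (intro continuous_intros indefinite_integral_continuous_1 regular_scale_integrable) simp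

lemma Zq_integrable: "0 \<le> s \<Longrightarrow> Zq q W integrable_on {s..t}"
  by (intro integrable_continuous_real continuous_on_subset[OF continuous_on_Zq]) auto

lemma Zbar_increment_bounds:
  assumes "0 \<le> q" "0 \<le> s" "s \<le> t"
  shows "t - s \<le> Zbar q W t - Zbar q W s" "Zbar q W t - Zbar q W s \<le> (t - s) * Zq q W t"
proof -
  have split: "Zbar q W t - Zbar q W s = integral {s..t} (Zq q W)"
    using Henstock_Kurzweil_Integration.integral_combine[of 0 s t "Zq q W"] Zq_integrable[where s=0 and t=t] assms
    by (simp add: Zbar_def)
  have "integral {s..t} (\<lambda>_. 1) \<le> integral {s..t} (Zq q W)"
    by (intro integral_le Zq_integrable Zq_ge_one assms) auto
  then show "t - s \<le> Zbar q W t - Zbar q W s" using split assms by simp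
  have "integral {s..t} (Zq q W) \<le> integral {s..t} (\<lambda>_. Zq q W t)"
    by (intro integral_le Zq_integrable Zq_mono) (use assms in auto)
  then show "Zbar q W t - Zbar q W s \<le> (t - s) * Zq q W t" using split assms by simp
qed

end

section \<open>Scale functions from their Laplace transforms\<close>

text \<open>An initial-value argument: if \<open>W \<le> w < 0\<close> on \<open>[0, \<eta>]\<close>, splitting the Laplace transform
  \<open>L(\<theta>)\<close> at \<open>1/\<theta>\<close> and \<open>\<eta>\<close> gives \<open>\<theta> L(\<theta>) \<le> w/e + \<theta> e\<^sup>-\<^sup>(\<^sup>\<theta>\<^sup>-\<^sup>\<theta>\<^sup>0\<^sup>)\<^sup>\<eta> L\<^sub>|\<^sub>W\<^sub>|(\<theta>\<^sub>0)\<close>, which is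
  eventually negative.\<close>

lemma laplace_integrand_le:
  fixes W :: "real \<Rightarrow> real"
  assumes W: "\<And>y. 0 \<le> y \<Longrightarrow> y \<le> \<eta> \<Longrightarrow> W y \<le> w" and "w < 0"
    and \<theta>: "0 < \<theta>" "1 / \<theta> \<le> \<eta>" "\<theta>0 \<le> \<theta>"
  shows "indicator {0..} y * (exp (- \<theta> * y) * W y)
    \<le> indicator {0..1/\<theta>} y * (w * exp (- 1)) + exp (- (\<theta> - \<theta>0) * \<eta>) * (indicator {0..} y * \<bar>exp (- \<theta>0 * y) * W y\<bar>)"
    (is "?lhs \<le> ?near + ?tail")
proof -
  have "0 \<le> ?tail" by simp
  consider "y < 0" | "0 \<le> y" "y \<le> 1 / \<theta>" | "1 / \<theta> < y" "W y \<le> 0" | "\<eta> < y" "0 < W y"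
    using W[of y] \<theta> \<open>w < 0\<close> by force
  then show ?thesis
  proof cases
    case 1
    then show ?thesis using \<open>0 \<le> ?tail\<close> by simp
  next
    case 2
    have "exp (- 1) \<le> exp (- \<theta> * y)" using 2 \<theta> by (simp add: field_simps)
    then have "exp (- \<theta> * y) * W y \<le> exp (- 1) * W y"
      using W[of y] 2 \<theta> \<open>w < 0\<close> by (intro mult_right_mono_neg) auto
    also have "\<dots> \<le> exp (- 1) * w" using W[of y] 2 \<theta> by simp
    finally have "?lhs \<le> ?near" using 2 by (simp add: mult.commute)
    then show ?thesis using \<open>0 \<le> ?tail\<close> by linarith
  next
    case 3
    then have "?lhs \<le> 0" by (simp add: mult_nonneg_nonpos)
    moreover have "?near = 0" using 3 by simp
    ultimately show ?thesis using \<open>0 \<le> ?tail\<close> by linarith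
  next
    case 4
    have "exp (- \<theta> * y) * W y = exp (- (\<theta> - \<theta>0) * y) * (exp (- \<theta>0 * y) * W y)"
      by (simp add: mult_exp_exp algebra_simps)
    also have "\<dots> \<le> exp (- (\<theta> - \<theta>0) * \<eta>) * \<bar>exp (- \<theta>0 * y) * W y\<bar>"
      using 4 \<theta> by (intro mult_mono) (auto simp: mult_left_mono_neg)
    finally show ?thesis using 4 \<theta> by (simp add: indicator_def)
  qed
qed

lemma laplace_transform_eventually_neg:
  fixes W :: "real \<Rightarrow> real"
  assumes cont: "continuous_on {0..} W" and "W 0 < 0"
    and int0: "set_integrable lborel {0..} (\<lambda>y. exp (- \<theta>0 * y) * W y)"
  shows "\<forall>\<^sub>F \<theta> in at_top. set_integrable lborel {0..} (\<lambda>y. exp (- \<theta> * y) * W y) \<longrightarrow>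
    (LINT y:{0..}|lborel. exp (- \<theta> * y) * W y) < 0"
proof -
  define w where "w = W 0 / 2"
  have "w < 0" using \<open>W 0 < 0\<close> by (simp add: w_def)
  obtain d where "0 < d" and d: "\<And>y. 0 \<le> y \<Longrightarrow> dist y 0 < d \<Longrightarrow> dist (W y) (W 0) < - w"
    using cont \<open>w < 0\<close> unfolding continuous_on_iff by (metis atLeast_iff neg_0_less_iff_less order_refl)
  define \<eta> where "\<eta> = d / 2"
  have "0 < \<eta>" using \<open>0 < d\<close> by (simp add: \<eta>_def)
  have W_near: "W y \<le> w" if "0 \<le> y" "y \<le> \<eta>" for y
    using d[of y] that \<open>0 < d\<close> by (auto simp: \<eta>_def w_def dist_real_def abs_less_iff)
  define C where "C = (LINT y|lborel. indicator {0..} y * \<bar>exp (- \<theta>0 * y) * W y\<bar>)"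
  have int_C: "integrable lborel (\<lambda>y. indicator {0..} y * \<bar>exp (- \<theta>0 * y) * W y\<bar>)"
    using integrable_abs[OF int0[unfolded set_integrable_def]] by (simp add: abs_mult)
  have "((\<lambda>\<theta>. \<theta> * exp (- (\<theta> - \<theta>0) * \<eta>) * C) \<longlongrightarrow> 0) at_top"
    using \<open>0 < \<eta>\<close> by real_asymp
  then have "\<forall>\<^sub>F \<theta> in at_top. \<theta> * exp (- (\<theta> - \<theta>0) * \<eta>) * C < - w * exp (- 1)"
    using \<open>w < 0\<close> by (intro order_tendstoD(2)) (auto simp: mult_neg_pos)
  moreover have "\<forall>\<^sub>F \<theta> in at_top. 0 < \<theta> \<and> 1 / \<eta> \<le> \<theta> \<and> \<theta>0 \<le> \<theta>"
    by (intro eventually_conj eventually_gt_at_top eventually_ge_at_top)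
  ultimately show ?thesis
  proof eventually_elim
    case (elim \<theta>)
    then have \<theta>: "0 < \<theta>" "1 / \<theta> \<le> \<eta>" "\<theta>0 \<le> \<theta>"
      using \<open>0 < \<eta>\<close> by (auto simp: field_simps)
    show ?case
    proof
      assume "set_integrable lborel {0..} (\<lambda>y. exp (- \<theta> * y) * W y)"
      moreover have int_near: "integrable lborel (\<lambda>y. indicator {0..1/\<theta>} y * (w * exp (- 1)))"
        using \<theta> by (simp add: integrable_indicator_iff)
      moreover have int_tail:
        "integrable lborel (\<lambda>y. exp (- (\<theta> - \<theta>0) * \<eta>) * (indicator {0..} y * \<bar>exp (- \<theta>0 * y) * W y\<bar>))"
        using int_C by simp
      ultimately have "(LINT y:{0..}|lborel. exp (- \<theta> * y) * W y)
          \<le> (LINT y|lborel. indicator {0..1/\<theta>} y * (w * exp (- 1))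
               + exp (- (\<theta> - \<theta>0) * \<eta>) * (indicator {0..} y * \<bar>exp (- \<theta>0 * y) * W y\<bar>))"
        unfolding set_lebesgue_integral_def set_integrable_def
        using laplace_integrand_le[where W=W, OF W_near \<open>w < 0\<close> \<theta>]
        by (intro integral_mono Bochner_Integration.integrable_add) auto
      also have "\<dots> = w * exp (- 1) / \<theta> + exp (- (\<theta> - \<theta>0) * \<eta>) * C"
        using \<theta> unfolding C_def Bochner_Integration.integral_add[OF int_near int_tail] by simp
      also have "\<dots> < 0"
        using elim \<theta> by (simp add: field_simps)
      finally show "(LINT y:{0..}|lborel. exp (- \<theta> * y) * W y) < 0" .
    qed
  qed
qed

lemma regular_scale_if_scale_fun:
  assumes sc: "is_scale_fun \<psi> q W" and unbounded: "\<exists>\<^sub>F \<theta> in at_top. q < \<psi> \<theta>"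
  shows "regular_scale W"
proof -
  have neg: "\<forall>x<0. W x = 0" and cont: "continuous_on {0..} W" and mono: "mono_on {0..} W"
    using sc unfolding is_scale_fun_def by (auto intro: strict_mono_on_imp_mono_on)
  have freq: "\<exists>\<^sub>F \<theta> in at_top. q < \<psi> \<theta> \<and> 0 < \<theta>"
    using unbounded eventually_gt_at_top[of 0] by (rule frequently_eventually_frequently)
  have "0 \<le> W 0"
  proof (rule ccontr)
    assume "\<not> 0 \<le> W 0"
    obtain \<theta>0 where "0 < \<theta>0" "q < \<psi> \<theta>0" using frequently_ex[OF freq] by blast
    then have "set_integrable lborel {0..} (\<lambda>y. exp (- \<theta>0 * y) * W y)"
      using sc unfolding is_scale_fun_def by blast
    with cont \<open>\<not> 0 \<le> W 0\<close> have "\<forall>\<^sub>F \<theta> in at_top. set_integrable lborel {0..} (\<lambda>y. exp (- \<theta> * y) * W y) \<longrightarrow>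
        (LINT y:{0..}|lborel. exp (- \<theta> * y) * W y) < 0"
      by (intro laplace_transform_eventually_neg) auto
    with freq obtain \<theta> where "0 < \<theta>" "q < \<psi> \<theta>"
      and "set_integrable lborel {0..} (\<lambda>y. exp (- \<theta> * y) * W y) \<longrightarrow>
        (LINT y:{0..}|lborel. exp (- \<theta> * y) * W y) < 0"
      using frequently_ex[OF frequently_eventually_frequently] by blast
    then show False using sc unfolding is_scale_fun_def by (auto simp: divide_less_0_iff)
  qed
  have "W x \<le> W y" if "x \<le> y" for x y
  proof (cases "x < 0")
    case True
    have "0 \<le> W y"
      using neg mono_onD[OF mono, of 0 y] \<open>0 \<le> W 0\<close> by (cases "y < 0") auto
    then show ?thesis using neg True by simp
  next
    case False
    then show ?thesis using mono that unfolding mono_on_def by auto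
  qed
  then show ?thesis using neg cont unfolding regular_scale_def mono_def by blast
qed

lemma scale_fun_le_exp:
  assumes sc: "is_scale_fun \<psi> q W" and W: "regular_scale W"
    and \<theta>: "0 < \<theta>" "q < \<psi> \<theta>" and "0 \<le> x"
  shows "W x \<le> exp (\<theta> * (x + 1)) / (\<psi> \<theta> - q)"
proof -
  have int: "set_integrable lborel {0..} (\<lambda>y. exp (- \<theta> * y) * W y)"
    and laplace: "(LINT y:{0..}|lborel. exp (- \<theta> * y) * W y) = 1 / (\<psi> \<theta> - q)"
    using sc \<theta> unfolding is_scale_fun_def by auto
  have "(LINT y|lborel. indicator {x..x+1} y * (W x * exp (- \<theta> * (x + 1))))
      \<le> (LINT y|lborel. indicator {0..} y * (exp (- \<theta> * y) * W y))"
  proof (rule integral_mono)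
    show "integrable lborel (\<lambda>y. indicator {0..} y * (exp (- \<theta> * y) * W y))"
      using int unfolding set_integrable_def by simp
    fix y
    have "W x * exp (- \<theta> * (x + 1)) \<le> exp (- \<theta> * y) * W y" if "y \<in> {x..x+1}"
      using that \<theta> regular_scale_mono[OF W, of x y] regular_scale_nonneg[OF W, of x]
      by (subst mult.commute) (intro mult_mono, auto)
    then show "indicator {x..x+1} y * (W x * exp (- \<theta> * (x + 1)))
        \<le> indicator {0..} y * (exp (- \<theta> * y) * W y)"
      using \<open>0 \<le> x\<close> regular_scale_nonneg[OF W, of y] by (auto simp: indicator_def)
  qed simp
  then have "W x * exp (- \<theta> * (x + 1)) \<le> 1 / (\<psi> \<theta> - q)"
    using laplace unfolding set_lebesgue_integral_def by simp
  then have "(W x * exp (- \<theta> * (x + 1))) * exp (\<theta> * (x + 1)) \<le> 1 / (\<psi> \<theta> - q) * exp (\<theta> * (x + 1))"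
    by (rule mult_right_mono) simp
  then show ?thesis by (simp add: mult.assoc flip: exp_add)
qed

lemma Zq_le_of_scale_fun:
  assumes sc: "is_scale_fun \<psi> q W" and W: "regular_scale W"
    and "0 \<le> q" "q < \<psi> 1" "0 \<le> B"
  shows "Zq q W B \<le> 1 + q * B * exp (B + 1) / (\<psi> 1 - q)"
proof -
  have "q * B * W B \<le> q * B * (exp (1 * (B + 1)) / (\<psi> 1 - q))"
    using scale_fun_le_exp[OF sc W, of 1 B] assms by (intro mult_left_mono) auto
  moreover have "Zq q W B - Zq q W 0 \<le> q * (B - 0) * W B"
    using Zq_increment_bounds(2)[OF W, of q 0 B] assms by simp
  ultimately show ?thesis by (simp add: Zq_def)
qed

section \<open>The root of a minimum over the first argument\<close>

definition prefix_min_zero :: "(real \<Rightarrow> real \<Rightarrow> real) \<Rightarrow> real \<Rightarrow> bool" where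
  "prefix_min_zero G b \<longleftrightarrow> (\<exists>a\<in>{0..b}. G a b = 0) \<and> (\<forall>a\<in>{0..b}. G a b \<ge> 0)"

lemma prefix_min_zero_exists:
  fixes G :: "real \<Rightarrow> real \<Rightarrow> real"
  assumes lip_a: "\<And>a a' b. 0 \<le> a \<Longrightarrow> 0 \<le> a' \<Longrightarrow> a \<le> b \<Longrightarrow> a' \<le> b \<Longrightarrow> b \<le> B \<Longrightarrow>
      \<bar>G a b - G a' b\<bar> \<le> L * \<bar>a - a'\<bar>"
    and lip_b: "\<And>a b b'. 0 \<le> a \<Longrightarrow> a \<le> b \<Longrightarrow> a \<le> b' \<Longrightarrow> b \<le> B \<Longrightarrow> b' \<le> B \<Longrightarrow>
      \<bar>G a b - G a b'\<bar> \<le> L * \<bar>b - b'\<bar>"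
    and "0 \<le> L" "0 \<le> B" "0 < G 0 0" "G 0 B < 0"
  shows "\<exists>b>0. prefix_min_zero G b"
proof -
  have "\<exists>a\<in>{0..b}. \<forall>a'\<in>{0..b}. G a b \<le> G a' b" if "0 \<le> b" "b \<le> B" for b
  proof (rule continuous_attains_inf)
    have "L-lipschitz_on {0..b} (\<lambda>a. G a b)"
      using lip_a that \<open>0 \<le> L\<close> by (intro lipschitz_onI) (auto simp: dist_real_def)
    then show "continuous_on {0..b} (\<lambda>a. G a b)" by (rule lipschitz_on_continuous_on)
  qed (use that in auto)
  then obtain amin where amin: "\<And>b. 0 \<le> b \<Longrightarrow> b \<le> B \<Longrightarrow>
      amin b \<in> {0..b} \<and> (\<forall>a\<in>{0..b}. G (amin b) b \<le> G a b)"
    by metis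
  define m where "m b = G (amin b) b" for b
  have m_le: "m b \<le> G a b" if "0 \<le> a" "a \<le> b" "b \<le> B" for a b
    using amin[of b] that unfolding m_def by auto
  \<comment> \<open>Clamping the minimiser at \<open>b\<close> into \<open>[0, b']\<close> moves it by at most \<open>|b - b'|\<close>.\<close>
  have m_step: "m b' \<le> m b + 2 * L * \<bar>b - b'\<bar>" if "b \<in> {0..B}" "b' \<in> {0..B}" for b b'
  proof -
    define a where "a = amin b"
    have a: "0 \<le> a" "a \<le> b" "m b = G a b" using amin[of b] that by (auto simp: a_def m_def)
    have "m b' \<le> G (min a b') b'" using m_le[of "min a b'" b'] a that by auto
    also have "\<dots> \<le> G (min a b') b + L * \<bar>b - b'\<bar>"
      using lip_b[of "min a b'" b b'] a that by (auto simp: abs_le_iff min_le_iff_disj)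
    also have "\<dots> \<le> G a b + L * \<bar>a - min a b'\<bar> + L * \<bar>b - b'\<bar>"
      using lip_a[of a "min a b'" b] a that by (auto simp: abs_le_iff min_le_iff_disj)
    also have "L * \<bar>a - min a b'\<bar> \<le> L * \<bar>b - b'\<bar>"
      using a \<open>0 \<le> L\<close> by (intro mult_left_mono) auto
    finally show ?thesis using a by simp
  qed
  have "(2 * L)-lipschitz_on {0..B} m"
  proof (intro lipschitz_onI)
    fix b b' assume "b \<in> {0..B}" "b' \<in> {0..B}"
    then show "dist (m b) (m b') \<le> 2 * L * dist b b'"
      using m_step[of b b'] m_step[of b' b] by (auto simp: dist_real_def abs_minus_commute)
  qed (use \<open>0 \<le> L\<close> in simp)
  then have "continuous_on {0..B} m" by (rule lipschitz_on_continuous_on)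
  moreover have "m 0 = G 0 0" using amin[of 0] \<open>0 \<le> B\<close> by (auto simp: m_def)
  moreover have "m B < 0" using m_le[of 0 B] assms by auto
  ultimately obtain b where b: "0 \<le> b" "b \<le> B" "m b = 0"
    using IVT2'[of m B 0 0] assms by auto
  then have "b \<noteq> 0" using \<open>m 0 = G 0 0\<close> assms by auto
  then show ?thesis
    using b amin[of b] m_le[of _ b] unfolding prefix_min_zero_def m_def
    by (intro exI[of _ b]) force
qed

lemma prefix_min_zero_unique:
  fixes G :: "real \<Rightarrow> real \<Rightarrow> real"
  assumes dec: "\<And>a b b'. 0 \<le> a \<Longrightarrow> a \<le> b \<Longrightarrow> b < b' \<Longrightarrow> G a b' < G a b"
    and "prefix_min_zero G b1" "prefix_min_zero G b2"
  shows "b1 = b2"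
proof -
  have "\<not> b < b'" if "prefix_min_zero G b" "prefix_min_zero G b'" for b b'
  proof
    assume "b < b'"
    obtain a where "a \<in> {0..b}" "G a b = 0" using \<open>prefix_min_zero G b\<close> unfolding prefix_min_zero_def by auto
    then show False
      using dec[of a b b'] \<open>b < b'\<close> \<open>prefix_min_zero G b'\<close> unfolding prefix_min_zero_def by force
  qed
  then show ?thesis using assms(2,3) by (meson linorder_neqE_linordered_idom)
qed

section \<open>The function \<open>\<Gamma>\<close>\<close>

definition scale_conv :: "real \<Rightarrow> (real \<Rightarrow> real) \<Rightarrow> (real \<Rightarrow> real) \<Rightarrow> real \<Rightarrow> real \<Rightarrow> real" where
  "scale_conv q WY WX a b = integral {0..a} (\<lambda>u. WY u * Zq q WX (b - u))"

context
  fixes WY WX :: "real \<Rightarrow> real" and q :: real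
  assumes WY: "regular_scale WY" and WX: "regular_scale WX" and q: "0 \<le> q"
begin

lemma scale_conv_integrable:
  assumes "0 \<le> c" "d \<le> b"
  shows "(\<lambda>u. WY u * Zq q WX (b - u)) integrable_on {c..d}"
proof (rule integrable_continuous_real, rule continuous_on_mult)
  show "continuous_on {c..d} WY"
    using WY assms unfolding regular_scale_def by (auto elim: continuous_on_subset)
  show "continuous_on {c..d} (\<lambda>u. Zq q WX (b - u))"
    by (intro continuous_on_compose2[OF continuous_on_Zq[OF WX, of b]] continuous_intros)
       (use assms in auto)
qed

lemma rtilde_integral_eq_scale_conv:
  "integral {b-a..b} (\<lambda>y. WY (b - y) * Zq q WX y) = scale_conv q WY WX a b"
proof -
  have "integral {b-a..b} (\<lambda>y. WY (b - y) * Zq q WX y)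
      = integral {-b..a-b} (\<lambda>x. WY (b + x) * Zq q WX (- x))"
    using Henstock_Kurzweil_Integration.integral_reflect_real[of b "b - a" "\<lambda>y. WY (b - y) * Zq q WX y"] by simp
  also have "\<dots> = integral {0..a} (\<lambda>u. WY u * Zq q WX (b - u))"
    using integral_shift_real_ivl[where f="\<lambda>u. WY u * Zq q WX (b - u)" and a=0 and b=a and c=b]
    by (simp add: add.commute)
  finally show ?thesis by (simp add: scale_conv_def)
qed

lemma scale_conv_increment_a:
  assumes "0 \<le> a'" "a' \<le> a" "a \<le> b"
  shows "0 \<le> scale_conv q WY WX a b - scale_conv q WY WX a' b"
    "scale_conv q WY WX a b - scale_conv q WY WX a' b \<le> (a - a') * (WY a * Zq q WX b)"
proof -
  let ?f = "\<lambda>u. WY u * Zq q WX (b - u)"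
  have split: "scale_conv q WY WX a b - scale_conv q WY WX a' b = integral {a'..a} ?f"
    using Henstock_Kurzweil_Integration.integral_combine[of 0 a' a ?f] scale_conv_integrable[of 0 a b] assms
    by (simp add: scale_conv_def)
  have f_nonneg: "0 \<le> ?f u" for u
    using regular_scale_nonneg[OF WY] Zq_nonneg[OF WX q] by simp
  show "0 \<le> scale_conv q WY WX a b - scale_conv q WY WX a' b"
    unfolding split using assms by (intro integral_nonneg scale_conv_integrable f_nonneg) auto
  have "integral {a'..a} ?f \<le> integral {a'..a} (\<lambda>_. WY a * Zq q WX b)"
  proof (intro integral_le scale_conv_integrable)
    fix u assume "u \<in> {a'..a}"
    then show "?f u \<le> WY a * Zq q WX b"
      using assms regular_scale_mono[OF WY, of u a] Zq_mono[OF WX q, of "b - u" b]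
        regular_scale_nonneg[OF WY] Zq_nonneg[OF WX q]
      by (intro mult_mono) auto
  qed (use assms in auto)
  also have "\<dots> = (a - a') * (WY a * Zq q WX b)" using assms by simp
  finally show "scale_conv q WY WX a b - scale_conv q WY WX a' b \<le> (a - a') * (WY a * Zq q WX b)"
    unfolding split .
qed

lemma scale_conv_increment_b:
  assumes "0 \<le> a" "a \<le> b" "b \<le> b'"
  shows "0 \<le> scale_conv q WY WX a b' - scale_conv q WY WX a b"
    "scale_conv q WY WX a b' - scale_conv q WY WX a b \<le> a * (WY a * (q * (b' - b) * WX b'))"
proof -
  let ?g = "\<lambda>u. WY u * (Zq q WX (b' - u) - Zq q WX (b - u))"
  have diff: "scale_conv q WY WX a b' - scale_conv q WY WX a b = integral {0..a} ?g"
    using integral_diff[OF scale_conv_integrable[of 0 a b'] scale_conv_integrable[of 0 a b]] assms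
    by (simp add: scale_conv_def algebra_simps)
  have g_int: "?g integrable_on {0..a}"
    using integrable_diff[OF scale_conv_integrable[of 0 a b'] scale_conv_integrable[of 0 a b]] assms
    by (simp add: algebra_simps)
  have g_bounds: "0 \<le> ?g u \<and> ?g u \<le> WY a * (q * (b' - b) * WX b')" if "u \<in> {0..a}" for u
  proof -
    have "0 \<le> Zq q WX (b' - u) - Zq q WX (b - u)"
      and "Zq q WX (b' - u) - Zq q WX (b - u) \<le> q * (b' - b) * WX (b' - u)"
      using Zq_increment_bounds[OF WX q, of "b - u" "b' - u"] that assms by auto
    moreover have "q * (b' - b) * WX (b' - u) \<le> q * (b' - b) * WX b'"
      using regular_scale_mono[OF WX, of "b' - u" b'] that assms q by (intro mult_left_mono) auto
    ultimately show ?thesis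
      using regular_scale_nonneg[OF WY, of u] regular_scale_mono[OF WY, of u a] that
      by (auto intro: mult_mono order_trans)
  qed
  show "0 \<le> scale_conv q WY WX a b' - scale_conv q WY WX a b"
    unfolding diff by (intro integral_nonneg g_int) (use g_bounds in auto)
  have "integral {0..a} ?g \<le> integral {0..a} (\<lambda>_. WY a * (q * (b' - b) * WX b'))"
    by (intro integral_le g_int) (use g_bounds in auto)
  also have "\<dots> = a * (WY a * (q * (b' - b) * WX b'))" using assms by simp
  finally show "scale_conv q WY WX a b' - scale_conv q WY WX a b \<le> a * (WY a * (q * (b' - b) * WX b'))"
    unfolding diff .
qed

lemma scale_conv_le:
  assumes "0 \<le> a" "a \<le> b"
  shows "scale_conv q WY WX a b \<le> Zq q WX b * integral {0..a} WY"
proof -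
  have "(\<lambda>u. Zq q WX b * WY u) integrable_on {0..a}"
    using integrable_on_cmult_left[OF regular_scale_integrable[OF WY, of 0 a]] by simp
  then have "scale_conv q WY WX a b \<le> integral {0..a} (\<lambda>u. Zq q WX b * WY u)"
    unfolding scale_conv_def
  proof (intro integral_le scale_conv_integrable)
    fix u assume "u \<in> {0..a}"
    then show "WY u * Zq q WX (b - u) \<le> Zq q WX b * WY u"
      using Zq_mono[OF WX q, of "b - u" b] regular_scale_nonneg[OF WY, of u] assms
      by (simp add: mult.commute mult_left_mono)
  qed (use assms in auto)
  then show ?thesis by simp
qed

end

context
  fixes WY WX :: "real \<Rightarrow> real" and q \<rho> \<beta> \<delta> dX :: real
  assumes WY: "regular_scale WY" and WX: "regular_scale WX"
    and q: "0 < q" and \<beta>: "0 < \<beta>" and \<delta>: "0 < \<delta>"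
begin

abbreviation "\<Gamma> \<equiv> Gam q \<rho> \<beta> \<delta> WY WX dX"

lemma Gam_eq:
  assumes "0 \<le> a" "a \<le> b"
  shows "\<Gamma> a b = \<delta> * Zq q WY a - q * \<rho> - q * \<beta> * (Zbar q WX b + dX / q + \<delta> * scale_conv q WY WX a b)"
  using rtilde_integral_eq_scale_conv[OF WY WX, of q b a] q
  unfolding Gam_def rtilde_def Rq_def by simp

lemma Gam_zero_left: "0 \<le> b \<Longrightarrow> \<Gamma> 0 b = \<delta> - q * \<rho> - \<beta> * dX - q * \<beta> * Zbar q WX b"
  using Gam_eq[of 0 b] q by (simp add: scale_conv_def Zq_def algebra_simps)

lemma Gam_strict_decreasing_b:
  assumes "0 \<le> a" "a \<le> b" "b < b'"
  shows "\<Gamma> a b' < \<Gamma> a b"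
proof -
  have "b' - b \<le> Zbar q WX b' - Zbar q WX b"
    using Zbar_increment_bounds(1)[OF WX, of q b b'] q assms by auto
  moreover have "0 \<le> scale_conv q WY WX a b' - scale_conv q WY WX a b"
    using scale_conv_increment_b(1)[OF WY WX, of q a b b'] q assms by auto
  ultimately have "0 < (Zbar q WX b' - Zbar q WX b) + \<delta> * (scale_conv q WY WX a b' - scale_conv q WY WX a b)"
    using \<delta> assms by (smt (verit) mult_nonneg_nonneg)
  then have "0 < q * \<beta> * ((Zbar q WX b' - Zbar q WX b) + \<delta> * (scale_conv q WY WX a b' - scale_conv q WY WX a b))"
    using q \<beta> by simp
  then show ?thesis using Gam_eq[of a b] Gam_eq[of a b'] assms by (simp add: algebra_simps)
qed

lemma Gam_increment_b:
  assumes "0 \<le> a" "a \<le> b" "b \<le> b'" "b' \<le> B"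
  shows "\<Gamma> a b - \<Gamma> a b' \<le> q * \<beta> * (Zq q WX B + \<delta> * B * WY B * q * WX B) * (b' - b)"
proof -
  have Zbar_inc: "Zbar q WX b' - Zbar q WX b \<le> (b' - b) * Zq q WX B"
  proof -
    have "(b' - b) * Zq q WX b' \<le> (b' - b) * Zq q WX B"
      using Zq_mono[OF WX, of q b' B] q assms by (intro mult_left_mono) auto
    then show ?thesis using Zbar_increment_bounds(2)[OF WX, of q b b'] q assms by linarith
  qed
  have conv_inc: "scale_conv q WY WX a b' - scale_conv q WY WX a b \<le> (b' - b) * (B * WY B * q * WX B)"
  proof -
    have "a * (WY a * (q * (b' - b) * WX b')) \<le> B * (WY B * (q * (b' - b) * WX B))"
      using assms q regular_scale_nonneg[OF WY] regular_scale_nonneg[OF WX]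
        regular_scale_mono[OF WY, of a B] regular_scale_mono[OF WX, of b' B]
      by (intro mult_mono mult_nonneg_nonneg) auto
    then show ?thesis
      using scale_conv_increment_b(2)[OF WY WX, of q a b b'] q assms by (simp add: algebra_simps)
  qed
  have "\<Gamma> a b - \<Gamma> a b'
      = q * \<beta> * ((Zbar q WX b' - Zbar q WX b) + \<delta> * (scale_conv q WY WX a b' - scale_conv q WY WX a b))"
    using Gam_eq[of a b] Gam_eq[of a b'] assms by (simp add: algebra_simps)
  also have "\<dots> \<le> q * \<beta> * ((b' - b) * Zq q WX B + \<delta> * ((b' - b) * (B * WY B * q * WX B)))"
    using Zbar_inc mult_left_mono[OF conv_inc, of \<delta>] q \<beta> \<delta> by (intro mult_left_mono add_mono) auto
  also have "\<dots> = q * \<beta> * (Zq q WX B + \<delta> * B * WY B * q * WX B) * (b' - b)"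
    by (simp add: algebra_simps)
  finally show ?thesis .
qed

lemma Gam_lipschitz_b:
  assumes "0 \<le> a" "a \<le> b" "a \<le> b'" "b \<le> B" "b' \<le> B"
  shows "\<bar>\<Gamma> a b - \<Gamma> a b'\<bar> \<le> q * \<beta> * (Zq q WX B + \<delta> * B * WY B * q * WX B) * \<bar>b - b'\<bar>"
proof (cases "b \<le> b'")
  case True
  then show ?thesis
    using Gam_increment_b[of a b b' B] Gam_strict_decreasing_b[of a b b'] assms by force
next
  case False
  then show ?thesis
    using Gam_increment_b[of a b' b B] Gam_strict_decreasing_b[of a b' b] assms by force
qed

lemma Gam_increment_a:
  assumes "0 \<le> a'" "a' \<le> a" "a \<le> b" "b \<le> B"
  shows "\<bar>\<Gamma> a b - \<Gamma> a' b\<bar> \<le> \<delta> * q * WY B * (1 + \<beta> * Zq q WX B) * (a - a')"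
proof -
  define u where "u = Zq q WY a - Zq q WY a'"
  define v where "v = scale_conv q WY WX a b - scale_conv q WY WX a' b"
  have "\<Gamma> a b - \<Gamma> a' b = \<delta> * u - q * \<beta> * \<delta> * v"
    using Gam_eq[of a b] Gam_eq[of a' b] assms by (simp add: u_def v_def algebra_simps)
  moreover have "0 \<le> u" "u \<le> q * (a - a') * WY B"
  proof -
    have "0 \<le> u" "u \<le> q * (a - a') * WY a"
      using Zq_increment_bounds[OF WY, of q a' a] q assms unfolding u_def by auto
    moreover have "q * (a - a') * WY a \<le> q * (a - a') * WY B"
      using regular_scale_mono[OF WY, of a B] q assms by (intro mult_left_mono) auto
    ultimately show "0 \<le> u" "u \<le> q * (a - a') * WY B" by linarith+
  qed
  moreover have "0 \<le> v" "v \<le> (a - a') * (WY B * Zq q WX B)"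
  proof -
    have "WY a * Zq q WX b \<le> WY B * Zq q WX B"
      using regular_scale_mono[OF WY, of a B] regular_scale_nonneg[OF WY] Zq_mono[OF WX, of q b B]
        Zq_nonneg[OF WX, of q] q assms
      by (intro mult_mono) auto
    then have "(a - a') * (WY a * Zq q WX b) \<le> (a - a') * (WY B * Zq q WX B)"
      using assms by (intro mult_left_mono) auto
    then show "0 \<le> v" "v \<le> (a - a') * (WY B * Zq q WX B)"
      using scale_conv_increment_a[OF WY WX, of q a' a b] q assms unfolding v_def by auto
  qed
  ultimately have "\<bar>\<Gamma> a b - \<Gamma> a' b\<bar> \<le> \<delta> * u + q * \<beta> * \<delta> * v"
    using q \<beta> \<delta> by (simp add: abs_le_iff)
  also have "\<dots> \<le> \<delta> * (q * (a - a') * WY B) + q * \<beta> * \<delta> * ((a - a') * (WY B * Zq q WX B))"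
    using \<open>u \<le> _\<close> \<open>v \<le> _\<close> q \<beta> \<delta> by (intro add_mono mult_left_mono) auto
  also have "\<dots> = \<delta> * q * WY B * (1 + \<beta> * Zq q WX B) * (a - a')"
    by (simp add: algebra_simps)
  finally show ?thesis .
qed

lemma Gam_lipschitz_a:
  assumes "0 \<le> a" "0 \<le> a'" "a \<le> b" "a' \<le> b" "b \<le> B"
  shows "\<bar>\<Gamma> a b - \<Gamma> a' b\<bar> \<le> \<delta> * q * WY B * (1 + \<beta> * Zq q WX B) * \<bar>a - a'\<bar>"
  using Gam_increment_a[of a' a b B] Gam_increment_a[of a a' b B] assms
  by (cases "a' \<le> a") (auto simp: abs_minus_commute)

lemma Gam_lower_bound:
  assumes "0 \<le> a" "a \<le> b" "b \<le> B" and small: "\<beta> * Zq q WX B \<le> 1"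
  shows "\<delta> - q * \<rho> - q * B - \<beta> * dX \<le> \<Gamma> a b"
proof -
  define I where "I = integral {0..a} WY"
  have "0 \<le> I" unfolding I_def using integral_regular_scale_bounds(1)[OF WY, of 0 a] assms by simp
  have conv: "q * \<beta> * \<delta> * scale_conv q WY WX a b \<le> q * \<delta> * I"
  proof -
    have "Zq q WX b * I \<le> Zq q WX B * I"
      using Zq_mono[OF WX, of q b B] \<open>0 \<le> I\<close> q assms by (intro mult_right_mono) auto
    then have "scale_conv q WY WX a b \<le> Zq q WX B * I"
      using scale_conv_le[OF WY WX, of q a b] q assms unfolding I_def by linarith
    then have "\<beta> * scale_conv q WY WX a b \<le> (\<beta> * Zq q WX B) * I"
      using \<beta> by (simp add: mult_left_mono mult.assoc)
    also have "\<dots> \<le> I" using mult_right_mono[OF small \<open>0 \<le> I\<close>] by simp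
    finally show ?thesis using q \<delta> by (simp add: mult_left_mono mult.assoc mult.left_commute)
  qed
  have Zbar: "q * \<beta> * Zbar q WX b \<le> q * B"
  proof -
    have "b * Zq q WX b \<le> B * Zq q WX B"
      using Zq_mono[OF WX, of q b B] Zq_nonneg[OF WX, of q] q assms by (intro mult_mono) auto
    then have "Zbar q WX b \<le> B * Zq q WX B"
      using Zbar_increment_bounds(2)[OF WX, of q 0 b] q assms by (simp add: Zbar_def)
    then have "\<beta> * Zbar q WX b \<le> B * (\<beta> * Zq q WX B)"
      using \<beta> by (simp add: mult_left_mono mult.left_commute)
    also have "\<dots> \<le> B" using small assms by (simp add: mult_left_le)
    finally show ?thesis using q by (simp add: mult_left_mono mult.assoc)
  qed
  have "\<Gamma> a b = \<delta> + q * \<delta> * I - q * \<rho> - \<beta> * dX - q * \<beta> * Zbar q WX b - q * \<beta> * \<delta> * scale_conv q WY WX a b"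
    using Gam_eq[OF assms(1,2)] q by (simp add: Zq_def I_def algebra_simps)
  then show ?thesis using conv Zbar by linarith
qed

lemma Gam_zero_left_neg: "\<exists>B\<ge>0. \<Gamma> 0 B < 0"
proof (intro exI conjI)
  define B where "B = max 0 ((\<delta> - q * \<rho> - \<beta> * dX) / (q * \<beta>) + 1)"
  show "0 \<le> B" by (simp add: B_def)
  have "(\<delta> - q * \<rho> - \<beta> * dX) / (q * \<beta>) < B" by (simp add: B_def)
  then have "\<delta> - q * \<rho> - \<beta> * dX < q * \<beta> * B"
    using q \<beta> by (simp add: pos_divide_less_eq mult.commute)
  also have "\<dots> \<le> q * \<beta> * Zbar q WX B"
    using Zbar_increment_bounds(1)[OF WX, of q 0 B] \<open>0 \<le> B\<close> q \<beta> by (simp add: Zbar_def)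
  finally show "\<Gamma> 0 B < 0" using Gam_zero_left[OF \<open>0 \<le> B\<close>] by simp
qed

lemma Gam_unique_root:
  assumes "0 < \<Gamma> 0 0"
  shows "\<exists>!b. 0 < b \<and> prefix_min_zero \<Gamma> b"
proof -
  obtain B where "0 \<le> B" "\<Gamma> 0 B < 0" using Gam_zero_left_neg by blast
  define La where "La = \<delta> * q * WY B * (1 + \<beta> * Zq q WX B)"
  define Lb where "Lb = q * \<beta> * (Zq q WX B + \<delta> * B * WY B * q * WX B)"
  have "0 \<le> WY B" "0 \<le> WX B" "0 \<le> Zq q WX B"
    using regular_scale_nonneg[OF WY] regular_scale_nonneg[OF WX] Zq_nonneg[OF WX] q by auto
  then have "0 \<le> La" "0 \<le> Lb"
    unfolding La_def Lb_def using q \<beta> \<delta> \<open>0 \<le> B\<close> by simp_all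
  have "\<exists>b>0. prefix_min_zero \<Gamma> b"
  proof (rule prefix_min_zero_exists[where B=B and L="La + Lb"])
    fix a a' b assume "0 \<le> a" "0 \<le> a'" "a \<le> b" "a' \<le> b" "b \<le> B"
    then have "\<bar>\<Gamma> a b - \<Gamma> a' b\<bar> \<le> La * \<bar>a - a'\<bar>"
      unfolding La_def by (rule Gam_lipschitz_a)
    also have "\<dots> \<le> (La + Lb) * \<bar>a - a'\<bar>"
      using \<open>0 \<le> Lb\<close> by (intro mult_right_mono) auto
    finally show "\<bar>\<Gamma> a b - \<Gamma> a' b\<bar> \<le> (La + Lb) * \<bar>a - a'\<bar>" .
  next
    fix a b b' assume "0 \<le> a" "a \<le> b" "a \<le> b'" "b \<le> B" "b' \<le> B"
    then have "\<bar>\<Gamma> a b - \<Gamma> a b'\<bar> \<le> Lb * \<bar>b - b'\<bar>"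
      unfolding Lb_def by (rule Gam_lipschitz_b)
    also have "\<dots> \<le> (La + Lb) * \<bar>b - b'\<bar>"
      using \<open>0 \<le> La\<close> by (intro mult_right_mono) auto
    finally show "\<bar>\<Gamma> a b - \<Gamma> a b'\<bar> \<le> (La + Lb) * \<bar>b - b'\<bar>" .
  next
    show "0 \<le> La + Lb" using \<open>0 \<le> La\<close> \<open>0 \<le> Lb\<close> by simp
  qed fact+
  moreover have "b1 = b2" if "prefix_min_zero \<Gamma> b1" "prefix_min_zero \<Gamma> b2" for b1 b2
    using Gam_strict_decreasing_b that by (rule prefix_min_zero_unique)
  ultimately show ?thesis by blast
qed

lemma selected_b_gt:
  assumes pos: "\<And>a b. 0 \<le> a \<Longrightarrow> a \<le> b \<Longrightarrow> b \<le> B0 \<Longrightarrow> 0 < \<Gamma> a b" and "0 \<le> B0"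
  shows "B0 < selected_b q \<rho> \<beta> \<delta> WY WX dX"
proof -
  have "0 < \<Gamma> 0 0" using pos \<open>0 \<le> B0\<close> by auto
  then have "prefix_min_zero \<Gamma> (THE b. 0 < b \<and> prefix_min_zero \<Gamma> b)"
    by (rule theI'[OF Gam_unique_root, THEN conjunct2])
  moreover have "selected_b q \<rho> \<beta> \<delta> WY WX dX = (THE b. 0 < b \<and> prefix_min_zero \<Gamma> b)"
    using \<open>0 < \<Gamma> 0 0\<close> unfolding selected_b_def prefix_min_zero_def Let_def by simp
  ultimately obtain a where "0 \<le> a" "a \<le> selected_b q \<rho> \<beta> \<delta> WY WX dX"
    "\<Gamma> a (selected_b q \<rho> \<beta> \<delta> WY WX dX) = 0"
    unfolding prefix_min_zero_def by auto
  then show ?thesis using pos[of a "selected_b q \<rho> \<beta> \<delta> WY WX dX"] by fastforce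
qed

lemma selected_b_gt_if_drift_dominates:
  assumes "0 \<le> B" "\<beta> * Zq q WX B \<le> 1" "q * \<rho> + q * B + \<beta> * dX < \<delta>"
  shows "B < selected_b q \<rho> \<beta> \<delta> WY WX dX"
proof (rule selected_b_gt)
  fix a b assume "0 \<le> a" "a \<le> b" "b \<le> B"
  then show "0 < \<Gamma> a b" using Gam_lower_bound[of a b B] assms by linarith
qed fact

end

section \<open>The Laplace exponent of a non-subordinator is unbounded\<close>

lemma frequently_at_top_if_eventually_sequentially:
  assumes "\<forall>\<^sub>F n in sequentially. P (real n)"
  shows "\<exists>\<^sub>F x in at_top. P x"
  unfolding frequently_def
proof
  assume "\<forall>\<^sub>F x in at_top. \<not> P x"
  then have "\<forall>\<^sub>F n in sequentially. \<not> P (real n)"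
    using filterlim_real_sequentially unfolding filterlim_iff by blast
  with assms have "\<forall>\<^sub>F n in sequentially. False" by eventually_elim simp
  then show False by simp
qed

lemma exp_minus_add_bounds:
  fixes x :: real
  assumes "0 \<le> x"
  shows "0 \<le> exp (- x) - 1 + x" "exp (- x) - 1 + x \<le> x\<^sup>2"
proof -
  have "1 - x \<le> exp (- x)" using exp_ge_add_one_self[of "- x"] by simp
  then show "0 \<le> exp (- x) - 1 + x" by simp
  have "(1 + x) * exp (- x) \<le> exp x * exp (- x)"
    using exp_ge_add_one_self[of x] by (intro mult_right_mono) auto
  then have "exp (- x) - 1 + x \<le> x * (1 - exp (- x))" by (simp add: exp_minus algebra_simps)
  also have "\<dots> \<le> x * x" using \<open>1 - x \<le> exp (- x)\<close> assms by (intro mult_left_mono) auto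
  finally show "exp (- x) - 1 + x \<le> x\<^sup>2" by (simp add: power2_eq_square)
qed

definition levy_integrand :: "real \<Rightarrow> real \<Rightarrow> real" where
  "levy_integrand \<theta> z = exp (- \<theta> * z) - 1 + \<theta> * z * indicator {..<1} z"

text \<open>The jump part of \<open>\<psi>\<^sub>Y(\<theta>) / \<theta>\<close> with the large jumps compensated, see \<open>psiY_eq_levy_slope\<close>.\<close>
definition levy_slope :: "real \<Rightarrow> real \<Rightarrow> real" where
  "levy_slope \<theta> z = indicator {0<..} z * ((levy_integrand \<theta> z + indicator {1..} z) / \<theta>)"

lemma levy_slope_nonneg: "0 < \<theta> \<Longrightarrow> 0 \<le> levy_slope \<theta> z"
  using exp_minus_add_bounds(1)[of "\<theta> * z"]
  by (cases "0 < z"; cases "z < 1") (auto simp: levy_slope_def levy_integrand_def)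

lemma levy_slope_tendsto:
  "((\<lambda>n. levy_slope (real (Suc n)) z) \<longlongrightarrow> indicator {0<..<1} z * z) sequentially"
proof (cases "0 < z")
  case True
  have vanish: "((\<lambda>n::nat. (exp (- real (Suc n) * z) - 1) / real (Suc n)) \<longlongrightarrow> 0) sequentially"
    using True by real_asymp
  show ?thesis
  proof (cases "z < 1")
    case True
    have "levy_slope (real (Suc n)) z = (exp (- real (Suc n) * z) - 1) / real (Suc n) + z" for n
      using True \<open>0 < z\<close> unfolding levy_slope_def levy_integrand_def
      by (simp add: field_simps del: of_nat_Suc)
    then show ?thesis using True \<open>0 < z\<close> tendsto_add[OF vanish tendsto_const[of z]] by simp
  next
    case False
    have "levy_slope (real (Suc n)) z = (exp (- real (Suc n) * z) - 1) / real (Suc n) + 1 / real (Suc n)" for n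
      using False \<open>0 < z\<close> unfolding levy_slope_def levy_integrand_def
      by (simp add: field_simps del: of_nat_Suc)
    moreover have "((\<lambda>n::nat. 1 / real (Suc n)) \<longlongrightarrow> 0) sequentially" by real_asymp
    ultimately show ?thesis using False \<open>0 < z\<close> tendsto_add[OF vanish] by simp
  qed
qed (simp add: levy_slope_def)

context
  fixes c \<sigma> :: real and Lm :: "real measure"
  assumes levy: "sp_levy_triple c \<sigma> Lm"
begin

lemma sets_levy: "sets Lm = sets borel"
  using levy unfolding sp_levy_triple_def by auto

lemma borel_measurable_levy: "(f :: real \<Rightarrow> real) \<in> borel_measurable borel \<Longrightarrow> f \<in> borel_measurable Lm"
  using measurable_cong_sets[OF sets_levy refl, of "borel :: real measure"] by simp

lemma borel_measurable_levy_slope: "levy_slope \<theta> \<in> borel_measurable Lm"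
  unfolding levy_slope_def levy_integrand_def by (intro borel_measurable_levy) measurable

lemma AE_levy_pos: "AE z in Lm. 0 < z"
  using levy sets_levy unfolding sp_levy_triple_def by (intro AE_I[where N="{..0}"]) auto

lemma integrable_levy_min_square: "integrable Lm (\<lambda>z. min 1 (z\<^sup>2))"
  using levy unfolding sp_levy_triple_def by auto

lemma integrable_levy_large_jumps: "integrable Lm (indicator {1..} :: real \<Rightarrow> real)"
proof (rule Bochner_Integration.integrable_bound[OF integrable_levy_min_square])
  show "(indicator {1..} :: real \<Rightarrow> real) \<in> borel_measurable Lm"
    by (intro borel_measurable_levy) measurable
  have "indicator {1..} z \<le> min 1 (z\<^sup>2)" for z :: real
    using one_le_power[of z 2] by (cases "1 \<le> z") auto
  then show "AE z in Lm. norm (indicator {1..} z :: real) \<le> norm (min 1 (z\<^sup>2))"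
    by (intro AE_I2) (simp add: indicator_def)
qed

lemma integrable_levy_integrand:
  assumes "0 \<le> \<theta>"
  shows "integrable Lm (levy_integrand \<theta>)"
proof (rule Bochner_Integration.integrable_bound)
  show "integrable Lm (\<lambda>z. (1 + \<theta>\<^sup>2) * min 1 (z\<^sup>2))"
    using integrable_levy_min_square by simp
  show "levy_integrand \<theta> \<in> borel_measurable Lm"
    unfolding levy_integrand_def by (intro borel_measurable_levy) measurable
  show "AE z in Lm. norm (levy_integrand \<theta> z) \<le> norm ((1 + \<theta>\<^sup>2) * min 1 (z\<^sup>2))"
    using AE_levy_pos
  proof eventually_elim
    case (elim z)
    show ?case
    proof (cases "z < 1")
      case True
      then have "min 1 (z\<^sup>2) = z\<^sup>2" using elim by (simp add: power_le_one)
      moreover have "(\<theta> * z)\<^sup>2 \<le> (1 + \<theta>\<^sup>2) * z\<^sup>2" by (simp add: power_mult_distrib algebra_simps)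
      ultimately show ?thesis
        using exp_minus_add_bounds[of "\<theta> * z"] True elim assms by (simp add: levy_integrand_def)
    next
      case False
      then have "min 1 (z\<^sup>2) = 1" using one_le_power[of z 2] by simp
      moreover have "\<bar>exp (- \<theta> * z) - 1\<bar> \<le> 1 + \<theta>\<^sup>2"
      proof -
        have "\<bar>exp (- \<theta> * z) - 1\<bar> \<le> 1" using elim assms by simp
        then show ?thesis by (simp add: add_increasing2)
      qed
      ultimately show ?thesis using False by (simp add: levy_integrand_def)
    qed
  qed
qed

lemma integrable_levy_slope:
  assumes "0 < \<theta>"
  shows "integrable Lm (levy_slope \<theta>)"
proof -
  have "integrable Lm (\<lambda>z. (levy_integrand \<theta> z + indicator {1..} z) / \<theta>)"
    using integrable_levy_integrand integrable_levy_large_jumps assms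
    by (intro integrable_divide Bochner_Integration.integrable_add) auto
  then have "integrable Lm (\<lambda>z. indicator {0<..} z *\<^sub>R ((levy_integrand \<theta> z + indicator {1..} z) / \<theta>))"
    using sets_levy by (intro integrable_mult_indicator) auto
  then show ?thesis unfolding levy_slope_def by simp
qed

lemma psiY_eq_levy_slope:
  assumes "0 < \<theta>"
  shows "psiY c \<sigma> Lm \<theta> = c * \<theta> + \<sigma>\<^sup>2 / 2 * \<theta>\<^sup>2 + \<theta> * (\<integral>z. levy_slope \<theta> z \<partial>Lm) - measure Lm {1..}"
proof -
  have "(\<integral>z. levy_slope \<theta> z \<partial>Lm) = (\<integral>z. (levy_integrand \<theta> z + indicator {1..} z) / \<theta> \<partial>Lm)"
  proof (rule integral_cong_AE)
    show "levy_slope \<theta> \<in> borel_measurable Lm" by (rule borel_measurable_levy_slope)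
    show "(\<lambda>z. (levy_integrand \<theta> z + indicator {1..} z) / \<theta>) \<in> borel_measurable Lm"
      unfolding levy_integrand_def by (intro borel_measurable_levy) measurable
    show "AE z in Lm. levy_slope \<theta> z = (levy_integrand \<theta> z + indicator {1..} z) / \<theta>"
      using AE_levy_pos by eventually_elim (simp add: levy_slope_def)
  qed
  also have "\<dots> = ((\<integral>z. levy_integrand \<theta> z \<partial>Lm) + measure Lm {1..}) / \<theta>"
    using integrable_levy_integrand[of \<theta>] integrable_levy_large_jumps assms
    by (simp add: sets_eq_imp_space_eq[OF sets_levy])
  finally show ?thesis
    using assms unfolding psiY_def levy_integrand_def by (simp add: field_simps)
qed

lemma small_jumps_le_liminf_slope:
  "(\<integral>\<^sup>+ z. ennreal (indicator {0<..<1} z * z) \<partial>Lm)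
    \<le> liminf (\<lambda>n. ennreal (\<integral>z. levy_slope (real (Suc n)) z \<partial>Lm))"
proof -
  have "(\<integral>\<^sup>+ z. ennreal (indicator {0<..<1} z * z) \<partial>Lm)
      = (\<integral>\<^sup>+ z. liminf (\<lambda>n. ennreal (levy_slope (real (Suc n)) z)) \<partial>Lm)"
    by (intro nn_integral_cong lim_imp_Liminf[symmetric] tendsto_ennrealI levy_slope_tendsto) simp
  also have "\<dots> \<le> liminf (\<lambda>n. \<integral>\<^sup>+ z. ennreal (levy_slope (real (Suc n)) z) \<partial>Lm)"
    by (rule nn_integral_liminf) (use borel_measurable_levy_slope in auto)
  also have "\<dots> = liminf (\<lambda>n. ennreal (\<integral>z. levy_slope (real (Suc n)) z \<partial>Lm))"
    by (intro arg_cong[where f=liminf] ext nn_integral_eq_integral integrable_levy_slope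
        AE_I2 levy_slope_nonneg) auto
  finally show ?thesis .
qed

text \<open>Without Gaussian part, \<open>Y\<close> is not a subordinator iff the (possibly infinite) mass
  \<open>\<integral>\<^sub>(\<^sub>0\<^sub>,\<^sub>1\<^sub>) z \<Pi>(dz)\<close> of the small jumps exceeds \<open>-c\<close>.\<close>
lemma drift_below_small_jumps:
  assumes "\<sigma> = 0"
  obtains r where "0 < c + r" "r \<le> 0 \<or> ennreal r < (\<integral>\<^sup>+ z. ennreal (indicator {0<..<1} z * z) \<partial>Lm)"
proof -
  let ?g = "\<lambda>z. indicator {0<..<1} z * z :: real"
  have g_meas: "?g \<in> borel_measurable Lm" by (intro borel_measurable_levy) measurable
  have h_meas: "(\<lambda>z. indicator {..<1} z *\<^sub>R z) \<in> borel_measurable Lm"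
    by (intro borel_measurable_levy) measurable
  have ae: "AE z in Lm. indicator {..<1} z *\<^sub>R z = ?g z"
    using AE_levy_pos by eventually_elim (simp add: indicator_def)
  have g_nonneg: "AE z in Lm. 0 \<le> ?g z" by (simp add: indicator_def)
  show ?thesis
  proof (cases "set_integrable Lm {..<1} (\<lambda>z. z)")
    case False
    have "(\<integral>\<^sup>+ z. ennreal (?g z) \<partial>Lm) = \<infinity>"
    proof (rule ccontr)
      assume "(\<integral>\<^sup>+ z. ennreal (?g z) \<partial>Lm) \<noteq> \<infinity>"
      then have "integrable Lm ?g" by (intro integrableI_nonneg[OF g_meas g_nonneg]) (simp add: top.not_eq_extremum)
      then show False using False integrable_cong_AE[OF h_meas g_meas ae] unfolding set_integrable_def by simp
    qed
    then show ?thesis by (intro that[of "\<bar>c\<bar> + 1"]) auto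
  next
    case True
    define l where "l = (LINT z:{..<1}|Lm. z)"
    have "0 < c + l"
      using levy assms True unfolding sp_levy_triple_def is_subordinator_triple_def l_def by auto
    have "integrable Lm ?g"
      using True integrable_cong_AE[OF h_meas g_meas ae] unfolding set_integrable_def by simp
    moreover have "l = (\<integral>z. ?g z \<partial>Lm)"
      unfolding l_def set_lebesgue_integral_def by (rule integral_cong_AE[OF h_meas g_meas ae])
    ultimately have "(\<integral>\<^sup>+ z. ennreal (?g z) \<partial>Lm) = ennreal l"
      using g_nonneg by (simp add: nn_integral_eq_integral)
    moreover have "(l - c) / 2 \<le> 0 \<or> ennreal ((l - c) / 2) < ennreal l"
      using \<open>0 < c + l\<close> by (cases "(l - c) / 2 \<le> 0") (simp_all add: ennreal_less_iff)
    moreover have "0 < c + (l - c) / 2" using \<open>0 < c + l\<close> by (simp add: field_simps)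
    ultimately show ?thesis by (intro that[of "(l - c) / 2"]) auto
  qed
qed

lemma drift_below_slope_integral:
  assumes "\<sigma> = 0"
  obtains r where "0 < c + r" "\<forall>\<^sub>F n in sequentially. r \<le> (\<integral>z. levy_slope (real (Suc n)) z \<partial>Lm)"
proof -
  obtain r where "0 < c + r" and r: "r \<le> 0 \<or> ennreal r < (\<integral>\<^sup>+ z. ennreal (indicator {0<..<1} z * z) \<partial>Lm)"
    using drift_below_small_jumps[OF assms] by blast
  have "\<forall>\<^sub>F n in sequentially. r \<le> (\<integral>z. levy_slope (real (Suc n)) z \<partial>Lm)"
  proof (cases "r \<le> 0")
    case True
    moreover have "0 \<le> (\<integral>z. levy_slope (real (Suc n)) z \<partial>Lm)" for n
      by (intro Bochner_Integration.integral_nonneg levy_slope_nonneg) simp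
    ultimately show ?thesis by (intro always_eventually allI) (auto intro: order_trans)
  next
    case False
    with r have "ennreal r < liminf (\<lambda>n. ennreal (\<integral>z. levy_slope (real (Suc n)) z \<partial>Lm))"
      using small_jumps_le_liminf_slope by (auto intro: order_less_le_trans)
    then have "\<forall>\<^sub>F n in sequentially. ennreal r < ennreal (\<integral>z. levy_slope (real (Suc n)) z \<partial>Lm)"
      by (rule less_LiminfD)
    then show ?thesis by eventually_elim (use False in \<open>auto simp: ennreal_less_iff\<close>)
  qed
  with \<open>0 < c + r\<close> show ?thesis by (rule that)
qed

lemma frequently_psiY_gt: "\<exists>\<^sub>F \<theta> in at_top. q < psiY c \<sigma> Lm \<theta>"
proof (cases "\<sigma> = 0")
  case False
  have "filterlim (\<lambda>\<theta>::real. c * \<theta> + \<sigma>\<^sup>2 / 2 * \<theta>\<^sup>2 - measure Lm {1..}) at_top at_top"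
    using False by real_asymp
  then have "\<forall>\<^sub>F \<theta> in at_top. q < c * \<theta> + \<sigma>\<^sup>2 / 2 * \<theta>\<^sup>2 - measure Lm {1..} \<and> 0 < \<theta>"
    by (intro eventually_conj filterlim_at_top_dense[THEN iffD1, rule_format] eventually_gt_at_top)
  then have "\<forall>\<^sub>F \<theta> in at_top. q < psiY c \<sigma> Lm \<theta>"
  proof eventually_elim
    case (elim \<theta>)
    then have "0 \<le> \<theta> * (\<integral>z. levy_slope \<theta> z \<partial>Lm)"
      by (simp add: levy_slope_nonneg)
    then show ?case using elim psiY_eq_levy_slope[of \<theta>] by simp
  qed
  then show ?thesis by (rule eventually_frequently[rotated]) simp
next
  case True
  obtain r where "0 < c + r"
    and slope: "\<forall>\<^sub>F n in sequentially. r \<le> (\<integral>z. levy_slope (real (Suc n)) z \<partial>Lm)"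
    using drift_below_slope_integral[OF True] by blast
  have "filterlim (\<lambda>n. real (Suc n) * (c + r) - measure Lm {1..}) at_top sequentially"
    using \<open>0 < c + r\<close> by real_asymp
  then have "\<forall>\<^sub>F n in sequentially. q < real (Suc n) * (c + r) - measure Lm {1..}"
    by (rule filterlim_at_top_dense[THEN iffD1, rule_format])
  with slope have "\<forall>\<^sub>F n in sequentially. q < psiY c \<sigma> Lm (real (Suc n))"
  proof eventually_elim
    case (elim n)
    have "real (Suc n) * r \<le> real (Suc n) * (\<integral>z. levy_slope (real (Suc n)) z \<partial>Lm)"
      using elim by (intro mult_left_mono) auto
    then show ?case
      using elim psiY_eq_levy_slope[of "real (Suc n)"] True by (simp add: algebra_simps)
  qed
  then have "\<forall>\<^sub>F n in sequentially. q < psiY c \<sigma> Lm (real n)"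
    by (subst eventually_sequentially_Suc[symmetric]) simp
  then show ?thesis by (rule frequently_at_top_if_eventually_sequentially)
qed

end

section \<open>Large drift\<close>

lemma dpsi0_add_linear_le:
  assumes "0 \<le> \<delta>"
  shows "dpsi0 (\<lambda>\<theta>. p \<theta> + \<delta> * \<theta>) \<le> dpsi0 p + \<delta>"
proof -
  have shift: "\<forall>\<^sub>F \<theta> in at_right 0. (p \<theta> + \<delta> * \<theta>) / \<theta> = p \<theta> / \<theta> + \<delta>"
    using eventually_at_right_less[of 0] by eventually_elim (simp add: field_simps)
  show ?thesis
  proof (cases "\<exists>l. ((\<lambda>\<theta>. p \<theta> / \<theta>) \<longlongrightarrow> l) (at_right 0)")
    case True
    then obtain l where l: "((\<lambda>\<theta>. p \<theta> / \<theta>) \<longlongrightarrow> l) (at_right 0)" by blast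
    then have "((\<lambda>\<theta>. (p \<theta> + \<delta> * \<theta>) / \<theta>) \<longlongrightarrow> l + \<delta>) (at_right 0)"
      using shift by (intro Lim_transform_eventually[OF tendsto_add[OF l tendsto_const]]) (simp add: eventually_mono)
    with l show ?thesis unfolding dpsi0_def by (simp add: tendsto_Lim)
  next
    case False
    \<comment> \<open>Then neither difference quotient converges and both values of \<open>Lim\<close> are the junk value \<open>THE l. False\<close>.\<close>
    have "\<not> ((\<lambda>\<theta>. (p \<theta> + \<delta> * \<theta>) / \<theta>) \<longlongrightarrow> l) (at_right 0)" for l
    proof
      assume "((\<lambda>\<theta>. (p \<theta> + \<delta> * \<theta>) / \<theta>) \<longlongrightarrow> l) (at_right 0)"
      then have "((\<lambda>\<theta>. p \<theta> / \<theta>) \<longlongrightarrow> l - \<delta>) (at_right 0)"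
        using shift by (intro Lim_transform_eventually[OF tendsto_diff[OF _ tendsto_const]]) (auto elim: eventually_mono)
      with False show False by blast
    qed
    with False have "dpsi0 (\<lambda>\<theta>. p \<theta> + \<delta> * \<theta>) = dpsi0 p"
      unfolding dpsi0_def t2_space_class.Lim_def by simp
    with assms show ?thesis by simp
  qed
qed

lemma selected_b_eventually_gt:
  fixes c \<sigma> q \<beta> \<rho> :: real and Lm :: "real measure"
    and WY :: "real \<Rightarrow> real" and WX :: "real \<Rightarrow> real \<Rightarrow> real"
  assumes levy: "sp_levy_triple c \<sigma> Lm"
    and q: "q > 0" and \<beta>: "0 < \<beta>" "\<beta> < 1"
    and scale_Y: "is_scale_fun (psiY c \<sigma> Lm) q WY"
    and scale_X: "\<And>\<delta>. \<delta> > 0 \<Longrightarrow> is_scale_fun (\<lambda>\<theta>. psiY c \<sigma> Lm \<theta> + \<delta> * \<theta>) q (WX \<delta>)"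
    and "0 \<le> B"
  shows "\<forall>\<^sub>F \<delta> in at_top. B < selected_b q \<rho> \<beta> \<delta> WY (WX \<delta>) (dpsi0 (\<lambda>\<theta>. psiY c \<sigma> Lm \<theta> + \<delta> * \<theta>))"
proof -
  let ?\<psi> = "psiY c \<sigma> Lm"
  have unbounded: "\<exists>\<^sub>F \<theta> in at_top. q < ?\<psi> \<theta>" by (rule frequently_psiY_gt[OF levy])
  have WY: "regular_scale WY" by (rule regular_scale_if_scale_fun[OF scale_Y unbounded])
  have WX: "regular_scale (WX \<delta>)" if "0 < \<delta>" for \<delta>
  proof (rule regular_scale_if_scale_fun[OF scale_X[OF that]])
    show "\<exists>\<^sub>F \<theta> in at_top. q < ?\<psi> \<theta> + \<delta> * \<theta>"
      using frequently_eventually_frequently[OF unbounded eventually_gt_at_top[of 0]]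
      by (rule frequently_elim1) (use that in \<open>auto intro: less_add_same_cancel1[THEN iffD2] order.strict_trans\<close>)
  qed
  have "((\<lambda>\<delta>. \<beta> * (1 + q * B * exp (B + 1) / (?\<psi> 1 + \<delta> - q))) \<longlongrightarrow> \<beta>) at_top"
    by real_asymp
  then have "\<forall>\<^sub>F \<delta> in at_top. \<beta> * (1 + q * B * exp (B + 1) / (?\<psi> 1 + \<delta> - q)) < 1"
    using \<beta> by (intro order_tendstoD(2)) auto
  moreover have "\<forall>\<^sub>F \<delta> in at_top. (q * \<rho> + q * B + \<beta> * dpsi0 ?\<psi>) / (1 - \<beta>) < \<delta>"
    by (rule eventually_gt_at_top)
  moreover have "\<forall>\<^sub>F \<delta> in at_top. 0 < \<delta> \<and> q - ?\<psi> 1 < \<delta>"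
    by (intro eventually_conj eventually_gt_at_top)
  ultimately show ?thesis
  proof eventually_elim
    case (elim \<delta>)
    then have "0 < \<delta>" by simp
    have "Zq q (WX \<delta>) B \<le> 1 + q * B * exp (B + 1) / (?\<psi> 1 + \<delta> * 1 - q)"
      using elim q \<open>0 \<le> B\<close> by (intro Zq_le_of_scale_fun[OF scale_X WX]) auto
    then have "\<beta> * Zq q (WX \<delta>) B \<le> \<beta> * (1 + q * B * exp (B + 1) / (?\<psi> 1 + \<delta> - q))"
      using \<beta> by (intro mult_left_mono) auto
    then have "\<beta> * Zq q (WX \<delta>) B \<le> 1" using elim by linarith
    moreover have "\<beta> * dpsi0 (\<lambda>\<theta>. ?\<psi> \<theta> + \<delta> * \<theta>) \<le> \<beta> * (dpsi0 ?\<psi> + \<delta>)"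
      using dpsi0_add_linear_le[of \<delta> ?\<psi>] \<open>0 < \<delta>\<close> \<beta> by (intro mult_left_mono) auto
    then have "q * \<rho> + q * B + \<beta> * dpsi0 (\<lambda>\<theta>. ?\<psi> \<theta> + \<delta> * \<theta>) < \<delta>"
      using elim \<beta> by (simp add: pos_divide_less_eq algebra_simps)
    ultimately show ?case
      using \<open>0 \<le> B\<close> by (intro selected_b_gt_if_drift_dominates[OF WY WX[OF \<open>0 < \<delta>\<close>] q \<beta>(1) \<open>0 < \<delta>\<close>])
  qed
qed

theorem mainTheorem12:
  fixes c \<sigma> q \<beta> \<rho> :: real and Lm :: "real measure"
    and WY :: "real \<Rightarrow> real" and WX :: "real \<Rightarrow> real \<Rightarrow> real"
  assumes "sp_levy_triple c \<sigma> Lm"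
    and "q > 0" and "0 < \<beta>" and "\<beta> < 1"
    and "is_scale_fun (psiY c \<sigma> Lm) q WY"
    and "\<And>\<delta>. \<delta> > 0 \<Longrightarrow> is_scale_fun (\<lambda>\<theta>. psiY c \<sigma> Lm \<theta> + \<delta> * \<theta>) q (WX \<delta>)"
  shows "eventually (\<lambda>\<delta>. selected_b q \<rho> \<beta> \<delta> WY (WX \<delta>)
                              (dpsi0 (\<lambda>\<theta>. psiY c \<sigma> Lm \<theta> + \<delta> * \<theta>)) > 0) at_top
    \<and> filterlim (\<lambda>\<delta>. selected_b q \<rho> \<beta> \<delta> WY (WX \<delta>)
                              (dpsi0 (\<lambda>\<theta>. psiY c \<sigma> Lm \<theta> + \<delta> * \<theta>))) at_top at_top"
proof -
  have eventually_gt: "\<forall>\<^sub>F \<delta> in at_top. B < selected_b q \<rho> \<beta> \<delta> WY (WX \<delta>) (dpsi0 (\<lambda>\<theta>. psiY c \<sigma> Lm \<theta> + \<delta> * \<theta>))"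
    if "0 \<le> B" for B
    by (rule selected_b_eventually_gt) (use assms that in auto)
  have "filterlim (\<lambda>\<delta>. selected_b q \<rho> \<beta> \<delta> WY (WX \<delta>) (dpsi0 (\<lambda>\<theta>. psiY c \<sigma> Lm \<theta> + \<delta> * \<theta>))) at_top at_top"
    unfolding filterlim_at_top_gt[where c=0]
  proof (intro allI impI)
    fix Z :: real assume "0 < Z"
    with eventually_gt[of Z]
    show "\<forall>\<^sub>F \<delta> in at_top. Z \<le> selected_b q \<rho> \<beta> \<delta> WY (WX \<delta>) (dpsi0 (\<lambda>\<theta>. psiY c \<sigma> Lm \<theta> + \<delta> * \<theta>))"
      by (auto elim: eventually_mono)
  qed
  with eventually_gt[of 0] show ?thesis by simp
qed

end
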